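(* Let $\ell>0$ and $\Omega_\ell=(0,\pi)\times(-\ell,\ell)$. Consider the eigenvalue problem \[ \begin{cases} \Delta^2 u=-\lambda \Delta u, & \text{in }\Omega_\ell,\\ u=0, & \text{on }\partial\Omega_\ell,\\ u_y=0, & \text{on }(0,\pi)\times\{-\ell,\ell\},\\ u_{xx}=0, & \text{on }\{0,\pi\}\times(-\ell,\ell). \end{cases} \] Then for every $k,m\in\mathbb N^*=\{1,2,\dots\}$ there exists a unique $\gamma_{k,m}\in\left(\frac{k\pi}{2\ell},\frac{(k+1)\pi}{2\ell}\right)$ satisfying $\gamma\tan(\gamma\ell)=-m\tanh(m\ell)$ if $k$ is odd, and $\frac{\tan(\gamma\ell)}{\gamma}=\frac{\tanh(m\ell)}{m}$ if $k$ is even. Setting $\lambda_{k,m}=m^2+\gamma_{k,m}^2$, the problem above admits the eigenfunction \[ u_{k,m}(x,y)=h_{k,m}(y)\sin(mx) \] with eigenvalue $\lambda_{k,m}$, where $h_{k,m}$ is a nontrivial solution of \[ \begin{cases} h^{(iv)}(y)+(\lambda-2m^2)h''(y)+m^2(m^2-\lambda)h(y)=0, & y\in(-\ell,\ell),\\ h(-\ell)=h(\ell)=0,\\ h'(-\ell)=h'(\ell)=0, \end{cases} \] with $\lambda=\lambda_{k,m}$; explicitly, with $\gamma=\gamma_{k,m}$, $h_{k,m}(y)=\cosh(my)-\frac{\cosh(m\ell)}{\cos(\gamma\ell)}\cos(\gamma y)$ if $k$ is odd and $h_{k,m}(y)=\sinh(my)-\frac{\sinh(m\ell)}{\sin(\gamma\ell)}\sin(\gamma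 y)$ if $k$ is even. Moreover: (a) if $k$ is odd then $h_{k,m}$ is even, and if $k$ is even then $h_{k,m}$ is odd; (b) if $k=1$ then $h_{1,m}$ is strictly positive on $(-\ell,\ell)$.
   Context: $\Delta$ denotes the Laplacian in $\mathbb R^2$ with coordinates $(x,y)$; subscripts denote partial derivatives. *)

theory Defs
  imports "HOL-Analysis.Analysis"
begin

definition dx :: "(real \<Rightarrow> real \<Rightarrow> real) \<Rightarrow> real \<Rightarrow> real \<Rightarrow> real" where
  "dx u = (\<lambda>x y. deriv (\<lambda>t. u t y) x)"

definition dy :: "(real \<Rightarrow> real \<Rightarrow> real) \<Rightarrow> real \<Rightarrow> real \<Rightarrow> real" where
  "dy u = (\<lambda>x y. deriv (\<lambda>t. u x t) y)"

definition lap :: "(real \<Rightarrow> real \<Rightarrow> real) \<Rightarrow> real \<Rightarrow> real \<Rightarrow> real" where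
  "lap u = (\<lambda>x y. dx (dx u) x y + dy (dy u) x y)"

definition Omega :: "real \<Rightarrow> (real \<times> real) set" where
  "Omega l = {0<..<pi} \<times> {-l<..<l}"

definition is_eigenpair :: "real \<Rightarrow> real \<Rightarrow> (real \<Rightarrow> real \<Rightarrow> real) \<Rightarrow> bool" where
  "is_eigenpair l lam u \<longleftrightarrow>
     (\<forall>x y. (x, y) \<in> Omega l \<longrightarrow> lap (lap u) x y = - lam * lap u x y) \<and>
     (\<forall>x y. (x, y) \<in> frontier (Omega l) \<longrightarrow> u x y = 0) \<and>
     (\<forall>x \<in> {0<..<pi}. dy u x (-l) = 0 \<and> dy u x l = 0) \<and>
     (\<forall>y \<in> {-l<..<l}. dx (dx u) 0 y = 0 \<and> dx (dx u) pi y = 0) \<and>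
     (\<exists>x y. (x, y) \<in> Omega l \<and> u x y \<noteq> 0)"

definition gamma_eq :: "nat \<Rightarrow> nat \<Rightarrow> real \<Rightarrow> real \<Rightarrow> bool" where
  "gamma_eq k m l \<gamma> \<longleftrightarrow>
     (if odd k then \<gamma> * tan (\<gamma> * l) = - real m * tanh (real m * l)
      else tan (\<gamma> * l) / \<gamma> = tanh (real m * l) / real m)"

definition hkm :: "nat \<Rightarrow> nat \<Rightarrow> real \<Rightarrow> real \<Rightarrow> real \<Rightarrow> real" where
  "hkm k m l \<gamma> y =
     (if odd k then cosh (real m * y) - cosh (real m * l) / cos (\<gamma> * l) * cos (\<gamma> * y)
      else sinh (real m * y) - sinh (real m * l) / sin (\<gamma> * l) * sin (\<gamma> * y))"

definition ode_solution :: "real \<Rightarrow> nat \<Rightarrow> real \<Rightarrow> (real \<Rightarrow> real) \<Rightarrow> bool" where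
  "ode_solution l m lam h \<longleftrightarrow>
     (\<forall>n y. (deriv ^^ n) h differentiable (at y)) \<and>
     (\<forall>y \<in> {-l<..<l}. (deriv ^^ 4) h y + (lam - 2 * (real m)\<^sup>2) * (deriv ^^ 2) h y
                        + (real m)\<^sup>2 * ((real m)\<^sup>2 - lam) * h y = 0) \<and>
     h (-l) = 0 \<and> h l = 0 \<and> deriv h (-l) = 0 \<and> deriv h l = 0 \<and>
     (\<exists>y \<in> {-l<..<l}. h y \<noteq> 0)"

end

theory Submission
  imports Defs
begin

text \<open>Separating variables, \<open>u = h(y) sin(m x)\<close> solves the plate problem once \<open>h\<close> solves the
  fourth-order ODE, whose characteristic roots \<open>\<plusminus>m, \<plusminus>i\<gamma>\<close> (with \<open>\<lambda> = m\<^sup>2 + \<gamma>\<^sup>2\<close>) make \<open>h\<close> a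
  combination of \<open>cosh, sinh, cos, sin\<close>. For the even (odd) profile the clamped conditions at
  \<open>\<plusminus>l\<close> reduce exactly to the transcendental equation for \<open>\<gamma>\<close>. On every interval
  \<open>(k\<pi>/2, (k+1)\<pi>/2)\<close> the functions \<open>t tan t\<close> and \<open>tan t / t\<close> are strictly increasing (their
  derivatives are \<open>(t \<plusminus> sin t cos t) / cos\<^sup>2 t\<close> with \<open>t > 1\<close>), and after clearing the
  denominator the equation changes sign across the interval, so it has exactly one root there.
  For \<open>k = 1\<close> the profile is positive: trivially where \<open>cos (\<gamma> y) \<ge> 0\<close>, and beyond
  \<open>\<gamma> y = \<pi>/2\<close> it is strictly convex with a double zero at \<open>l\<close>.\<close>

definition hyp_trig :: "real \<Rightarrow> real \<Rightarrow> real \<Rightarrow> real \<Rightarrow> real \<Rightarrow> real \<Rightarrow> real \<Rightarrow> real" where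
  "hyp_trig m g a b c d y = a * cosh (m * y) + b * sinh (m * y) + c * cos (g * y) + d * sin (g * y)"

lemma has_real_derivative_hyp_trig:
  "(hyp_trig m g a b c d has_real_derivative hyp_trig m g (m * b) (m * a) (g * d) (- g * c) y) (at y)"
  unfolding hyp_trig_def [abs_def]
  by (rule derivative_eq_intros refl | simp)+

lemma deriv_hyp_trig: "deriv (hyp_trig m g a b c d) = hyp_trig m g (m * b) (m * a) (g * d) (- g * c)"
  using has_real_derivative_hyp_trig DERIV_imp_deriv by blast

lemma higher_deriv_hyp_trig: "\<exists>a' b' c' d'. (deriv ^^ n) (hyp_trig m g a b c d) = hyp_trig m g a' b' c' d'"
  by (induction n) (force simp: deriv_hyp_trig)+

lemma higher_deriv_hyp_trig_differentiable: "(deriv ^^ n) (hyp_trig m g a b c d) differentiable (at y)"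
  using higher_deriv_hyp_trig has_real_derivative_hyp_trig real_differentiable_def by metis

lemma deriv2_hyp_trig:
  "(deriv ^^ 2) (hyp_trig m g a b c d) = hyp_trig m g (m\<^sup>2 * a) (m\<^sup>2 * b) (- g\<^sup>2 * c) (- g\<^sup>2 * d)"
  by (simp add: numeral_2_eq_2 deriv_hyp_trig power2_eq_square algebra_simps)

lemma deriv4_hyp_trig:
  "(deriv ^^ 4) (hyp_trig m g a b c d) = hyp_trig m g (m ^ 4 * a) (m ^ 4 * b) (g ^ 4 * c) (g ^ 4 * d)"
  by (simp add: numeral_eq_Suc deriv_hyp_trig power_def algebra_simps)

lemma ode_solution_hyp_trig:
  assumes "h = hyp_trig (real m) g a b c d"
    and "h (- l) = 0" "h l = 0" "deriv h (- l) = 0" "deriv h l = 0"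
    and "y\<^sub>0 \<in> {- l<..<l}" "h y\<^sub>0 \<noteq> 0"
  shows "ode_solution l m ((real m)\<^sup>2 + g\<^sup>2) h"
  unfolding ode_solution_def
  using assms higher_deriv_hyp_trig_differentiable
  by (auto simp: deriv2_hyp_trig deriv4_hyp_trig hyp_trig_def algebra_simps power2_eq_square power4_eq_xxxx)

lemma dx_mult_sin: "dx (\<lambda>x y. F y * sin (M * x)) = (\<lambda>x y. F y * M * cos (M * x))"
  unfolding dx_def
  by (intro ext DERIV_imp_deriv) (rule derivative_eq_intros refl | simp)+

lemma dx_mult_cos: "dx (\<lambda>x y. F y * M * cos (M * x)) = (\<lambda>x y. - (M\<^sup>2) * F y * sin (M * x))"
  unfolding dx_def
  by (intro ext DERIV_imp_deriv) ((rule derivative_eq_intros refl | simp)+, simp add: power2_eq_square)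

lemma dy_hyp_trig_mult:
  "dy (\<lambda>x y. hyp_trig m g a b c d y * S x) = (\<lambda>x y. deriv (hyp_trig m g a b c d) y * S x)"
  unfolding dy_def deriv_hyp_trig
  by (intro ext DERIV_imp_deriv) (rule derivative_eq_intros has_real_derivative_hyp_trig refl | simp)+

lemma lap_hyp_trig_sin:
  "lap (\<lambda>x y. hyp_trig m g a b c d y * sin (M * x)) =
   (\<lambda>x y. hyp_trig m g ((m\<^sup>2 - M\<^sup>2) * a) ((m\<^sup>2 - M\<^sup>2) * b) ((- g\<^sup>2 - M\<^sup>2) * c) ((- g\<^sup>2 - M\<^sup>2) * d) y * sin (M * x))"
  unfolding lap_def dx_mult_sin dx_mult_cos dy_hyp_trig_mult deriv_hyp_trig
  by (intro ext) (simp add: hyp_trig_def power2_eq_square algebra_simps)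

lemma frontier_Omega:
  assumes "l > 0"
  shows "frontier (Omega l) = {0..pi} \<times> {- l..l} - Omega l"
proof -
  have "open (Omega l)"
    unfolding Omega_def by (intro open_Times open_greaterThanLessThan)
  then show ?thesis
    unfolding frontier_def interior_open[OF \<open>open (Omega l)\<close>]
    unfolding Omega_def closure_Times using assms by simp
qed

lemma is_eigenpair_hyp_trig_sin:
  assumes "l > 0" "m \<ge> 1" and h: "h = hyp_trig (real m) g a b c d"
    and bc: "h (- l) = 0" "h l = 0" "deriv h (- l) = 0" "deriv h l = 0"
    and y\<^sub>0: "y\<^sub>0 \<in> {- l<..<l}" "h y\<^sub>0 \<noteq> 0"
  shows "is_eigenpair l ((real m)\<^sup>2 + g\<^sup>2) (\<lambda>x y. h y * sin (real m * x))"
proof -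
  let ?u = "\<lambda>x y. h y * sin (real m * x)"
  have sin_m_pi: "sin (real m * pi) = 0"
    by (simp add: mult.commute[of "real m"])
  have "sin (real m * (pi / (2 * real m))) = 1" "pi / (2 * real m) \<in> {0<..<pi}"
    using \<open>m \<ge> 1\<close> by (auto simp: field_simps)
  then have "\<exists>x y. (x, y) \<in> Omega l \<and> ?u x y \<noteq> 0"
    using y\<^sub>0 unfolding Omega_def by force
  moreover have "?u x y = 0" if "(x, y) \<in> frontier (Omega l)" for x y
  proof -
    have "(x, y) \<in> {0..pi} \<times> {- l..l} - Omega l"
      using that frontier_Omega[OF \<open>l > 0\<close>] by simp
    then show ?thesis
      using bc sin_m_pi unfolding Omega_def by auto
  qed
  moreover have "lap (lap ?u) x y = - ((real m)\<^sup>2 + g\<^sup>2) * lap ?u x y" for x y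
    unfolding h lap_hyp_trig_sin by (simp add: hyp_trig_def algebra_simps power2_eq_square)
  moreover have "dy ?u x y = deriv h y * sin (real m * x)" for x y
    unfolding h dy_hyp_trig_mult ..
  moreover have "dx (dx ?u) x y = - ((real m)\<^sup>2) * h y * sin (real m * x)" for x y
    unfolding dx_mult_sin dx_mult_cos ..
  ultimately show ?thesis
    unfolding is_eigenpair_def using bc sin_m_pi by auto
qed

lemma cos_sin_nonzero_between_half_pi_multiples:
  fixes t :: real and k :: nat
  assumes "real k * pi / 2 < t" "t < (real k + 1) * pi / 2"
  shows "cos t \<noteq> 0" "sin t \<noteq> 0"
proof -
  have "sin (2 * t) \<noteq> 0"
  proof
    assume "sin (2 * t) = 0"
    then obtain i :: int where "2 * t = of_int i * pi"
      using sin_zero_iff_int2 by blast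
    with assms have "real k * pi < of_int i * pi" "of_int i * pi < (real k + 1) * pi"
      by linarith+
    then have "of_int (int k) < (of_int i :: real)" "of_int i < (of_int (int k + 1) :: real)"
      by (simp_all add: mult_less_cancel_right_pos)
    then show False
      unfolding of_int_less_iff by linarith
  qed
  then show "cos t \<noteq> 0" "sin t \<noteq> 0"
    by (auto simp: sin_double)
qed

lemma one_less_above_half_pi_multiple:
  fixes t :: real and k :: nat
  assumes "k \<ge> 1" "real k * pi / 2 < t"
  shows "1 < t"
proof -
  have "pi / 2 \<le> real k * pi / 2"
    using assms(1) by (simp add: field_simps)
  with assms(2) pi_gt3 show ?thesis
    by linarith
qed

lemma has_real_derivative_mult_tan:
  assumes "cos t \<noteq> 0"
  shows "((\<lambda>t. t * tan t) has_real_derivative (sin t * cos t + t) / (cos t)\<^sup>2) (at t)"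
proof (rule DERIV_cong[OF DERIV_mult[OF DERIV_ident DERIV_tan[OF assms]]])
  show "1 * tan t + inverse ((cos t)\<^sup>2) * t = (sin t * cos t + t) / (cos t)\<^sup>2"
    using assms by (simp add: tan_def field_simps power2_eq_square)
qed

lemma has_real_derivative_tan_divide:
  assumes "cos t \<noteq> 0" "t \<noteq> 0"
  shows "((\<lambda>t. tan t / t) has_real_derivative (t - sin t * cos t) / (t\<^sup>2 * (cos t)\<^sup>2)) (at t)"
proof (rule DERIV_cong[OF DERIV_divide[OF DERIV_tan[OF assms(1)] DERIV_ident assms(2)]])
  show "(inverse ((cos t)\<^sup>2) * t - tan t * 1) / (t * t) = (t - sin t * cos t) / (t\<^sup>2 * (cos t)\<^sup>2)"
    using assms by (simp add: tan_def field_simps power2_eq_square)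
qed

lemma strict_mono_on_greaterThanLessThan_if_deriv_pos:
  fixes f :: "real \<Rightarrow> real"
  assumes "\<And>t. a < t \<Longrightarrow> t < b \<Longrightarrow> (f has_real_derivative f' t) (at t) \<and> f' t > 0"
  shows "strict_mono_on {a<..<b} f"
proof (rule strict_mono_onI)
  fix r s assume rs: "r \<in> {a<..<b}" "s \<in> {a<..<b}" "r < s"
  show "f r < f s"
  proof (rule DERIV_pos_imp_increasing[OF \<open>r < s\<close>])
    fix t assume "r \<le> t" "t \<le> s"
    with rs have "a < t" "t < b"
      by auto
    with assms show "\<exists>y. (f has_real_derivative y) (at t) \<and> y > 0"
      by blast
  qed
qed

lemma strict_mono_on_mult_tan:
  fixes k :: nat
  assumes "k \<ge> 1"
  shows "strict_mono_on {real k * pi / 2 <..< (real k + 1) * pi / 2} (\<lambda>t. t * tan t)"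
proof (rule strict_mono_on_greaterThanLessThan_if_deriv_pos[OF conjI])
  fix t assume t: "real k * pi / 2 < t" "t < (real k + 1) * pi / 2"
  have "t > 1"
    using one_less_above_half_pi_multiple[OF assms t(1)] .
  have "cos t \<noteq> 0"
    using cos_sin_nonzero_between_half_pi_multiples[OF t] by blast
  then show "((\<lambda>t. t * tan t) has_real_derivative (sin t * cos t + t) / (cos t)\<^sup>2) (at t)"
    by (rule has_real_derivative_mult_tan)
  have "\<bar>sin t * cos t\<bar> \<le> 1"
    by (simp add: abs_mult mult_le_one)
  with \<open>t > 1\<close> \<open>cos t \<noteq> 0\<close> show "(sin t * cos t + t) / (cos t)\<^sup>2 > 0"
    by (intro divide_pos_pos) auto
qed

lemma strict_mono_on_tan_divide:
  fixes k :: nat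
  assumes "k \<ge> 1"
  shows "strict_mono_on {real k * pi / 2 <..< (real k + 1) * pi / 2} (\<lambda>t. tan t / t)"
proof (rule strict_mono_on_greaterThanLessThan_if_deriv_pos[OF conjI])
  fix t assume t: "real k * pi / 2 < t" "t < (real k + 1) * pi / 2"
  have "t > 1"
    using one_less_above_half_pi_multiple[OF assms t(1)] .
  have "cos t \<noteq> 0"
    using cos_sin_nonzero_between_half_pi_multiples[OF t] by blast
  with \<open>t > 1\<close> show "((\<lambda>t. tan t / t) has_real_derivative (t - sin t * cos t) / (t\<^sup>2 * (cos t)\<^sup>2)) (at t)"
    by (intro has_real_derivative_tan_divide) auto
  have "\<bar>sin t * cos t\<bar> \<le> 1"
    by (simp add: abs_mult mult_le_one)
  with \<open>t > 1\<close> \<open>cos t \<noteq> 0\<close> show "(t - sin t * cos t) / (t\<^sup>2 * (cos t)\<^sup>2) > 0"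
    by (intro divide_pos_pos) auto
qed

lemma root_between_of_sign_change:
  fixes f :: "real \<Rightarrow> real"
  assumes "a < b" "continuous_on {a..b} f" "f a * f b < 0"
  obtains x where "a < x" "x < b" "f x = 0"
proof -
  have "f a \<le> 0 \<and> 0 \<le> f b \<or> f b \<le> 0 \<and> 0 \<le> f a"
    using assms(3) by (auto simp: mult_less_0_iff)
  then obtain x where "a \<le> x" "x \<le> b" "f x = 0"
    using IVT'[of f a 0 b] IVT2'[of f b 0 a] assms(1,2) by force
  moreover have "x \<noteq> a" "x \<noteq> b"
    using \<open>f x = 0\<close> assms(3) by auto
  ultimately have "a < x" "x < b"
    by auto
  with \<open>f x = 0\<close> show ?thesis
    using that by blast
qed

lemma ex1_mult_tan_eq:
  fixes k :: nat and c :: real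
  assumes "odd k" "c > 0"
  shows "\<exists>!t. t \<in> {real k * pi / 2 <..< (real k + 1) * pi / 2} \<and> t * tan t = - c"
proof (rule ex_ex1I)
  have "k \<ge> 1"
    using \<open>odd k\<close> by (cases k) auto
  define a where "a = real k * pi / 2"
  have "a > 0"
    using \<open>k \<ge> 1\<close> by (simp add: a_def)
  have "cos a = 0"
    using \<open>odd k\<close> unfolding cos_zero_iff a_def by (intro disjI1 exI[of _ k]) simp
  then have "(sin a)\<^sup>2 = 1"
    using sin_cos_squared_add[of a] by simp
  \<comment> \<open>clearing the denominator \<open>cos t\<close> gives a function continuous up to the endpoints\<close>
  define \<phi> where "\<phi> t = t * sin t + c * cos t" for t
  have "continuous_on {a..a + pi / 2} \<phi>"
    unfolding \<phi>_def by (intro continuous_intros)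
  moreover have "\<phi> a * \<phi> (a + pi / 2) = - (a * c * (sin a)\<^sup>2)"
    unfolding \<phi>_def using \<open>cos a = 0\<close> by (simp add: sin_add cos_add power2_eq_square algebra_simps)
  then have "\<phi> a * \<phi> (a + pi / 2) < 0"
    using \<open>a > 0\<close> \<open>c > 0\<close> \<open>(sin a)\<^sup>2 = 1\<close> by simp
  ultimately obtain t where t: "a < t" "t < a + pi / 2" "\<phi> t = 0"
    by (rule root_between_of_sign_change[rotated]) (simp_all add: pi_half_gt_zero)
  then have t': "real k * pi / 2 < t" "t < (real k + 1) * pi / 2"
    by (simp_all add: a_def field_simps)
  then have "cos t \<noteq> 0"
    by (rule cos_sin_nonzero_between_half_pi_multiples)
  moreover have "t * sin t = - (c * cos t)"
    using \<open>\<phi> t = 0\<close> unfolding \<phi>_def by linarith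
  ultimately have "t * tan t = - c"
    by (simp add: tan_def field_simps)
  with t' show "\<exists>t. t \<in> {real k * pi / 2 <..< (real k + 1) * pi / 2} \<and> t * tan t = - c"
    by auto
  show "t = s" if "t \<in> {real k * pi / 2 <..< (real k + 1) * pi / 2} \<and> t * tan t = - c"
    and "s \<in> {real k * pi / 2 <..< (real k + 1) * pi / 2} \<and> s * tan s = - c" for t s
    by (rule inj_onD[OF strict_mono_on_imp_inj_on[OF strict_mono_on_mult_tan[OF \<open>k \<ge> 1\<close>]]])
      (use that in auto)
qed

lemma ex1_tan_divide_eq:
  fixes k :: nat and c :: real
  assumes "even k" "k \<ge> 1" "c > 0"
  shows "\<exists>!t. t \<in> {real k * pi / 2 <..< (real k + 1) * pi / 2} \<and> tan t / t = c"
proof (rule ex_ex1I)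
  define a where "a = real k * pi / 2"
  have "a > 0"
    using \<open>k \<ge> 1\<close> by (simp add: a_def)
  have "sin a = 0"
    using \<open>even k\<close> unfolding sin_zero_iff a_def by (intro disjI1 exI[of _ k]) simp
  then have "(cos a)\<^sup>2 = 1"
    using sin_cos_squared_add[of a] by simp
  define \<phi> where "\<phi> t = sin t - c * t * cos t" for t
  have "continuous_on {a..a + pi / 2} \<phi>"
    unfolding \<phi>_def by (intro continuous_intros)
  moreover have "\<phi> a * \<phi> (a + pi / 2) = - (a * c * (cos a)\<^sup>2)"
    unfolding \<phi>_def using \<open>sin a = 0\<close> by (simp add: sin_add cos_add power2_eq_square algebra_simps)
  then have "\<phi> a * \<phi> (a + pi / 2) < 0"
    using \<open>a > 0\<close> \<open>c > 0\<close> \<open>(cos a)\<^sup>2 = 1\<close> by simp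
  ultimately obtain t where t: "a < t" "t < a + pi / 2" "\<phi> t = 0"
    by (rule root_between_of_sign_change[rotated]) (simp_all add: pi_half_gt_zero)
  then have t': "real k * pi / 2 < t" "t < (real k + 1) * pi / 2"
    by (simp_all add: a_def field_simps)
  then have "cos t \<noteq> 0"
    by (rule cos_sin_nonzero_between_half_pi_multiples)
  moreover have "t \<noteq> 0"
    using \<open>a > 0\<close> t by simp
  moreover have "sin t = c * t * cos t"
    using \<open>\<phi> t = 0\<close> unfolding \<phi>_def by linarith
  ultimately have "tan t / t = c"
    by (simp add: tan_def field_simps)
  with t' show "\<exists>t. t \<in> {real k * pi / 2 <..< (real k + 1) * pi / 2} \<and> tan t / t = c"
    by auto
  show "t = s" if "t \<in> {real k * pi / 2 <..< (real k + 1) * pi / 2} \<and> tan t / t = c"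
    and "s \<in> {real k * pi / 2 <..< (real k + 1) * pi / 2} \<and> tan s / s = c" for t s
    by (rule inj_onD[OF strict_mono_on_imp_inj_on[OF strict_mono_on_tan_divide[OF \<open>k \<ge> 1\<close>]]])
      (use that in auto)
qed

lemma ex1_rescale:
  fixes l :: real
  assumes "l > 0" "\<exists>!t. t \<in> {a <..< b} \<and> P t"
  shows "\<exists>!\<gamma>. \<gamma> \<in> {a / l <..< b / l} \<and> P (\<gamma> * l)"
proof -
  obtain t where t: "t \<in> {a <..< b}" "P t"
    and unique: "\<And>s. s \<in> {a <..< b} \<Longrightarrow> P s \<Longrightarrow> s = t"
    using assms(2) by auto
  have mem: "\<gamma> \<in> {a / l <..< b / l} \<longleftrightarrow> \<gamma> * l \<in> {a <..< b}" for \<gamma>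
    using assms(1) by (simp add: field_simps)
  show ?thesis
  proof (rule ex1I[of _ "t / l"])
    show "t / l \<in> {a / l <..< b / l} \<and> P (t / l * l)"
      using t mem assms(1) by simp
    show "\<gamma> = t / l" if "\<gamma> \<in> {a / l <..< b / l} \<and> P (\<gamma> * l)" for \<gamma>
    proof -
      have "\<gamma> * l = t"
        using that mem by (intro unique) auto
      then show ?thesis
        using assms(1) by (simp add: eq_divide_eq)
    qed
  qed
qed

lemma hkm_odd_eq_hyp_trig:
  "odd k \<Longrightarrow> hkm k m l \<gamma> = hyp_trig (real m) \<gamma> 1 0 (- (cosh (real m * l) / cos (\<gamma> * l))) 0"
  by (auto simp: hkm_def hyp_trig_def)

lemma hkm_even_eq_hyp_trig:
  "even k \<Longrightarrow> hkm k m l \<gamma> = hyp_trig (real m) \<gamma> 0 1 0 (- (sinh (real m * l) / sin (\<gamma> * l)))"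
  by (auto simp: hkm_def hyp_trig_def)

lemma hkm_odd_boundary_values:
  assumes "odd k" "cos (\<gamma> * l) \<noteq> 0" "\<gamma> * tan (\<gamma> * l) = - real m * tanh (real m * l)"
  shows "hkm k m l \<gamma> (- l) = 0" "hkm k m l \<gamma> l = 0"
    "deriv (hkm k m l \<gamma>) (- l) = 0" "deriv (hkm k m l \<gamma>) l = 0"
proof -
  have "\<gamma> * sin (\<gamma> * l) * cosh (real m * l) = - real m * sinh (real m * l) * cos (\<gamma> * l)"
    using assms(2,3) by (simp add: tan_def tanh_def field_simps)
  then have "real m * sinh (real m * l) + \<gamma> * (cosh (real m * l) / cos (\<gamma> * l)) * sin (\<gamma> * l) = 0"
    using assms(2) by (simp add: field_simps)
  then show "deriv (hkm k m l \<gamma>) (- l) = 0" "deriv (hkm k m l \<gamma>) l = 0"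
    unfolding hkm_odd_eq_hyp_trig[OF \<open>odd k\<close>] deriv_hyp_trig by (simp_all add: hyp_trig_def)
  show "hkm k m l \<gamma> (- l) = 0" "hkm k m l \<gamma> l = 0"
    using assms(1,2) by (simp_all add: hkm_def)
qed

lemma hkm_even_boundary_values:
  assumes "even k" "cos (\<gamma> * l) \<noteq> 0" "sin (\<gamma> * l) \<noteq> 0" "\<gamma> \<noteq> 0" "m \<noteq> 0"
    and "tan (\<gamma> * l) / \<gamma> = tanh (real m * l) / real m"
  shows "hkm k m l \<gamma> (- l) = 0" "hkm k m l \<gamma> l = 0"
    "deriv (hkm k m l \<gamma>) (- l) = 0" "deriv (hkm k m l \<gamma>) l = 0"
proof -
  have "real m * sin (\<gamma> * l) * cosh (real m * l) = \<gamma> * sinh (real m * l) * cos (\<gamma> * l)"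
    using assms(2-6) by (simp add: tan_def tanh_def field_simps)
  then have "real m * cosh (real m * l) - \<gamma> * (sinh (real m * l) / sin (\<gamma> * l)) * cos (\<gamma> * l) = 0"
    using assms(3) by (simp add: field_simps)
  then show "deriv (hkm k m l \<gamma>) (- l) = 0" "deriv (hkm k m l \<gamma>) l = 0"
    unfolding hkm_even_eq_hyp_trig[OF \<open>even k\<close>] deriv_hyp_trig by (simp_all add: hyp_trig_def)
  show "hkm k m l \<gamma> (- l) = 0" "hkm k m l \<gamma> l = 0"
    using assms(1,3) by (simp_all add: hkm_def)
qed

lemma one_less_cosh: "x \<noteq> 0 \<Longrightarrow> 1 < cosh (x :: real)"
  using cosh_real_nonneg_less_iff[of 0 "\<bar>x\<bar>"] by simp

lemma hkm_odd_at_zero_nonzero: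
  assumes "odd k" "real m * l \<noteq> 0"
  shows "hkm k m l \<gamma> 0 \<noteq> 0"
proof -
  have "\<bar>cos (\<gamma> * l)\<bar> < cosh (real m * l)"
    using one_less_cosh[OF assms(2)] abs_cos_le_one[of "\<gamma> * l"] by linarith
  then show ?thesis
    using assms(1) by (auto simp: hkm_def)
qed

lemma hkm_even_nonzero:
  assumes "even k" "m \<noteq> 0" "\<gamma> > 0"
  shows "hkm k m l \<gamma> (pi / \<gamma>) \<noteq> 0"
  using assms by (simp add: hkm_def)

lemma pos_before_double_zero_if_convex:
  fixes f :: "real \<Rightarrow> real"
  assumes "a < b"
    and f': "\<And>s. a \<le> s \<Longrightarrow> s \<le> b \<Longrightarrow> (f has_real_derivative f' s) (at s)"
    and f'': "\<And>s. a \<le> s \<Longrightarrow> s \<le> b \<Longrightarrow> (f' has_real_derivative f'' s) (at s)"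
    and "\<And>s. a < s \<Longrightarrow> s < b \<Longrightarrow> f'' s > 0"
    and "f b = 0" "f' b = 0"
  shows "f a > 0"
proof -
  have f'_neg: "f' s < 0" if "a < s" "s < b" for s
  proof -
    have "f' s < f' b"
    proof (rule DERIV_pos_imp_increasing_open[OF \<open>s < b\<close>])
      show "\<exists>y. (f' has_real_derivative y) (at t) \<and> y > 0" if "s < t" "t < b" for t
        using that \<open>a < s\<close> f'' assms(4) by (meson less_imp_le order.strict_trans)
      show "continuous_on {s..b} f'"
        using \<open>a < s\<close> f'' by (intro DERIV_atLeastAtMost_imp_continuous_on) (meson less_imp_le order_trans)
    qed
    then show ?thesis
      using \<open>f' b = 0\<close> by simp
  qed
  have "f b < f a"
  proof (rule DERIV_neg_imp_decreasing_open[OF \<open>a < b\<close>])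
    show "\<exists>y. (f has_real_derivative y) (at t) \<and> y < 0" if "a < t" "t < b" for t
      using that f' f'_neg by (meson less_imp_le)
    show "continuous_on {a..b} f"
      using f' by (intro DERIV_atLeastAtMost_imp_continuous_on) blast
  qed
  then show ?thesis
    using \<open>f b = 0\<close> by simp
qed

lemma cos_neg_between_half_pi_and_pi: "pi / 2 < x \<Longrightarrow> x < pi \<Longrightarrow> cos x < 0"
  using cos_gt_zero_pi[of "pi - x"] by simp

lemma hyp_trig_cosh_cos_pos:
  fixes M \<gamma> C :: real
  assumes "M > 0" "\<gamma> > 0" "\<gamma> * l < pi" "C < 0"
    and "hyp_trig M \<gamma> 1 0 (- C) 0 l = 0" "hyp_trig M \<gamma> 0 M 0 (\<gamma> * C) l = 0"
    and "0 \<le> z" "z < l"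
  shows "hyp_trig M \<gamma> 1 0 (- C) 0 z > 0"
proof (cases "\<gamma> * z \<le> pi / 2")
  case True
  moreover have "0 \<le> \<gamma> * z"
    using assms(2,7) by simp
  ultimately have "cos (\<gamma> * z) \<ge> 0"
    by (intro cos_ge_zero) linarith+
  with \<open>C < 0\<close> have "C * cos (\<gamma> * z) \<le> 0"
    by (simp add: mult_nonpos_nonneg)
  moreover have "hyp_trig M \<gamma> 1 0 (- C) 0 z = cosh (M * z) - C * cos (\<gamma> * z)"
    by (simp add: hyp_trig_def)
  ultimately show ?thesis
    using cosh_real_pos[of "M * z"] by linarith
next
  case False
  have h': "(hyp_trig M \<gamma> 1 0 (- C) 0 has_real_derivative hyp_trig M \<gamma> 0 M 0 (\<gamma> * C) s) (at s)" for s
    using has_real_derivative_hyp_trig[of M \<gamma> 1 0 "- C" 0 s] by simp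
  have h'': "(hyp_trig M \<gamma> 0 M 0 (\<gamma> * C) has_real_derivative hyp_trig M \<gamma> (M\<^sup>2) 0 (\<gamma>\<^sup>2 * C) 0 s) (at s)" for s
    using has_real_derivative_hyp_trig[of M \<gamma> 0 M 0 "\<gamma> * C" s] by (simp add: power2_eq_square mult.assoc)
  show ?thesis
  proof (rule pos_before_double_zero_if_convex[OF \<open>z < l\<close> h' h'' _ assms(5,6)])
    fix s assume "z < s" "s < l"
    then have "\<gamma> * z < \<gamma> * s" "\<gamma> * s < \<gamma> * l"
      using \<open>\<gamma> > 0\<close> by simp_all
    then have "cos (\<gamma> * s) < 0"
      using False assms(3) by (intro cos_neg_between_half_pi_and_pi) linarith+
    with \<open>C < 0\<close> \<open>\<gamma> > 0\<close> have "0 < \<gamma>\<^sup>2 * (C * cos (\<gamma> * s))"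
      by (simp add: mult_neg_neg)
    moreover have "0 < M\<^sup>2 * cosh (M * s)"
      using \<open>M > 0\<close> by simp
    ultimately show "hyp_trig M \<gamma> (M\<^sup>2) 0 (\<gamma>\<^sup>2 * C) 0 s > 0"
      by (simp add: hyp_trig_def mult.assoc)
  qed
qed

lemma hkm_first_mode_pos:
  assumes "l > 0" "m \<ge> 1" "pi / 2 < \<gamma> * l" "\<gamma> * l < pi"
    and "\<gamma> * tan (\<gamma> * l) = - real m * tanh (real m * l)"
    and "\<bar>y\<bar> < l"
  shows "hkm 1 m l \<gamma> y > 0"
proof -
  define C where "C = cosh (real m * l) / cos (\<gamma> * l)"
  have "cos (\<gamma> * l) < 0"
    using assms(3,4) by (rule cos_neg_between_half_pi_and_pi)
  then have "C < 0" "cos (\<gamma> * l) \<noteq> 0"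
    by (simp_all add: C_def divide_pos_neg)
  have "\<gamma> * l > 0"
    using assms(3) pi_gt_zero by linarith
  with \<open>l > 0\<close> have "\<gamma> > 0"
    by (simp add: zero_less_mult_iff)
  have h: "hkm 1 m l \<gamma> = hyp_trig (real m) \<gamma> 1 0 (- C) 0"
    unfolding C_def by (rule hkm_odd_eq_hyp_trig[OF odd_one])
  from hkm_odd_boundary_values[OF odd_one \<open>cos (\<gamma> * l) \<noteq> 0\<close> assms(5)]
  have "hyp_trig (real m) \<gamma> 1 0 (- C) 0 l = 0" "hyp_trig (real m) \<gamma> 0 (real m) 0 (\<gamma> * C) l = 0"
    unfolding h deriv_hyp_trig by simp_all
  then have pos: "hyp_trig (real m) \<gamma> 1 0 (- C) 0 z > 0" if "0 \<le> z" "z < l" for z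
    using hyp_trig_cosh_cos_pos[of "real m" \<gamma> l C] \<open>m \<ge> 1\<close> \<open>\<gamma> > 0\<close> assms(4) \<open>C < 0\<close> that by simp
  have "hkm 1 m l \<gamma> y = hkm 1 m l \<gamma> \<bar>y\<bar>"
    by (cases "y \<ge> 0") (simp_all add: hkm_def)
  also have "\<dots> > 0"
    unfolding h using assms(6) by (intro pos) simp_all
  finally show ?thesis .
qed

lemma mem_gamma_interval_iff:
  assumes "l > 0"
  shows "\<gamma> \<in> {real k * pi / (2 * l) <..< (real k + 1) * pi / (2 * l)} \<longleftrightarrow>
    real k * pi / 2 < \<gamma> * l \<and> \<gamma> * l < (real k + 1) * pi / 2"
  using assms by (auto simp: field_simps)

lemma gamma_eq_odd_iff:
  assumes "l > 0" "odd k"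
  shows "gamma_eq k m l \<gamma> \<longleftrightarrow> \<gamma> * l * tan (\<gamma> * l) = - (real m * l * tanh (real m * l))"
proof -
  have "\<gamma> * l * tan (\<gamma> * l) = - (real m * l * tanh (real m * l)) \<longleftrightarrow>
      l * (\<gamma> * tan (\<gamma> * l)) = l * (- real m * tanh (real m * l))"
    by (simp add: algebra_simps)
  also have "\<dots> \<longleftrightarrow> gamma_eq k m l \<gamma>"
    using assms by (subst mult_left_cancel) (simp_all add: gamma_eq_def)
  finally show ?thesis ..
qed

lemma gamma_eq_even_iff:
  assumes "l > 0" "even k"
  shows "gamma_eq k m l \<gamma> \<longleftrightarrow> tan (\<gamma> * l) / (\<gamma> * l) = tanh (real m * l) / (real m * l)"
proof -
  have "tan (\<gamma> * l) / (\<gamma> * l) = tanh (real m * l) / (real m * l) \<longleftrightarrow>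
      tan (\<gamma> * l) / \<gamma> / l = tanh (real m * l) / real m / l"
    by simp
  also have "\<dots> \<longleftrightarrow> gamma_eq k m l \<gamma>"
    using assms by (subst divide_cancel_right) (simp add: gamma_eq_def)
  finally show ?thesis ..
qed

lemma ex1_gamma_eq:
  assumes "l > 0" "k \<ge> 1" "m \<ge> 1"
  shows "\<exists>!\<gamma>. \<gamma> \<in> {real k * pi / (2 * l) <..< (real k + 1) * pi / (2 * l)} \<and> gamma_eq k m l \<gamma>"
proof -
  have "real m * l > 0"
    using assms by simp
  have interval: "{real k * pi / (2 * l) <..< (real k + 1) * pi / (2 * l)} =
      {real k * pi / 2 / l <..< (real k + 1) * pi / 2 / l}"
    by simp
  show ?thesis
  proof (cases "odd k")
    case True
    have "real m * l * tanh (real m * l) > 0"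
      using \<open>real m * l > 0\<close> by simp
    then show ?thesis
      unfolding interval gamma_eq_odd_iff[OF \<open>l > 0\<close> True]
      by (rule ex1_rescale[OF \<open>l > 0\<close> ex1_mult_tan_eq[OF True]])
  next
    case False
    then have "even k"
      by simp
    have "tanh (real m * l) / (real m * l) > 0"
      using \<open>real m * l > 0\<close> by simp
    then show ?thesis
      unfolding interval gamma_eq_even_iff[OF \<open>l > 0\<close> \<open>even k\<close>]
      by (rule ex1_rescale[OF \<open>l > 0\<close> ex1_tan_divide_eq[OF \<open>even k\<close> \<open>k \<ge> 1\<close>]])
  qed
qed

lemma hkm_boundary_values:
  assumes "l > 0" "m \<ge> 1"
    and "\<gamma> \<in> {real k * pi / (2 * l) <..< (real k + 1) * pi / (2 * l)}" "gamma_eq k m l \<gamma>"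
  shows "hkm k m l \<gamma> (- l) = 0 \<and> hkm k m l \<gamma> l = 0 \<and>
    deriv (hkm k m l \<gamma>) (- l) = 0 \<and> deriv (hkm k m l \<gamma>) l = 0"
proof -
  have t: "real k * pi / 2 < \<gamma> * l" "\<gamma> * l < (real k + 1) * pi / 2"
    using assms(3) mem_gamma_interval_iff[OF \<open>l > 0\<close>] by blast+
  then have cos: "cos (\<gamma> * l) \<noteq> 0" and sin: "sin (\<gamma> * l) \<noteq> 0"
    by (rule cos_sin_nonzero_between_half_pi_multiples)+
  have "0 \<le> real k * pi / 2"
    by simp
  with t have "\<gamma> * l > 0"
    by linarith
  then have "\<gamma> \<noteq> 0"
    by auto
  show ?thesis
  proof (cases "odd k")
    case True
    with assms(4) have "\<gamma> * tan (\<gamma> * l) = - real m * tanh (real m * l)"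
      by (simp add: gamma_eq_def)
    from hkm_odd_boundary_values[OF True cos this] show ?thesis
      by blast
  next
    case False
    then have "even k"
      by simp
    with assms(4) have "tan (\<gamma> * l) / \<gamma> = tanh (real m * l) / real m"
      by (simp add: gamma_eq_def)
    from hkm_even_boundary_values[OF \<open>even k\<close> cos sin \<open>\<gamma> \<noteq> 0\<close> _ this] \<open>m \<ge> 1\<close> show ?thesis
      by simp
  qed
qed

lemma hkm_nonzero_somewhere:
  assumes "l > 0" "k \<ge> 1" "m \<ge> 1"
    and "\<gamma> \<in> {real k * pi / (2 * l) <..< (real k + 1) * pi / (2 * l)}"
  shows "\<exists>y \<in> {- l<..<l}. hkm k m l \<gamma> y \<noteq> 0"
proof (cases "odd k")
  case True
  have "hkm k m l \<gamma> 0 \<noteq> 0"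
    using hkm_odd_at_zero_nonzero[OF True] assms(1,3) by simp
  moreover have "0 \<in> {- l<..<l}"
    using \<open>l > 0\<close> by simp
  ultimately show ?thesis
    by blast
next
  case False
  then have "k \<ge> 2"
    using \<open>k \<ge> 1\<close> by presburger
  then have "2 * pi \<le> real k * pi"
    by (simp add: mult_right_mono)
  moreover have "real k * pi / 2 < \<gamma> * l"
    using assms(4) mem_gamma_interval_iff[OF \<open>l > 0\<close>] by blast
  ultimately have "pi < \<gamma> * l"
    by linarith
  then have "\<gamma> * l > 0"
    using pi_gt_zero by linarith
  with \<open>l > 0\<close> have "\<gamma> > 0"
    by (simp add: zero_less_mult_iff)
  with \<open>pi < \<gamma> * l\<close> have "pi / \<gamma> \<in> {- l<..<l}"
    using \<open>l > 0\<close> by (auto simp: pos_divide_less_eq mult.commute intro: less_trans[of "- l" 0])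
  moreover have "hkm k m l \<gamma> (pi / \<gamma>) \<noteq> 0"
    using hkm_even_nonzero[of k m \<gamma> l] False \<open>m \<ge> 1\<close> \<open>\<gamma> > 0\<close> by simp
  ultimately show ?thesis
    by blast
qed

lemma eigenpair_and_ode_solution_hkm:
  assumes "l > 0" "k \<ge> 1" "m \<ge> 1"
    and "\<gamma> \<in> {real k * pi / (2 * l) <..< (real k + 1) * pi / (2 * l)}" "gamma_eq k m l \<gamma>"
  shows "is_eigenpair l ((real m)\<^sup>2 + \<gamma>\<^sup>2) (\<lambda>x y. hkm k m l \<gamma> y * sin (real m * x)) \<and>
    ode_solution l m ((real m)\<^sup>2 + \<gamma>\<^sup>2) (hkm k m l \<gamma>)"
proof -
  have "\<exists>a b c d. hkm k m l \<gamma> = hyp_trig (real m) \<gamma> a b c d"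
    using hkm_odd_eq_hyp_trig[of k m l \<gamma>] hkm_even_eq_hyp_trig[of k m l \<gamma>] by (cases "odd k") blast+
  then obtain a b c d where h: "hkm k m l \<gamma> = hyp_trig (real m) \<gamma> a b c d"
    by blast
  obtain y\<^sub>0 where "y\<^sub>0 \<in> {- l<..<l}" "hkm k m l \<gamma> y\<^sub>0 \<noteq> 0"
    using hkm_nonzero_somewhere[OF assms(1-4)] by blast
  with hkm_boundary_values[OF assms(1,3-5)] show ?thesis
    using is_eigenpair_hyp_trig_sin[OF assms(1,3) h] ode_solution_hyp_trig[OF h] by blast
qed

lemma hkm_parity:
  "odd k \<Longrightarrow> hkm k m l \<gamma> (- y) = hkm k m l \<gamma> y"
  "even k \<Longrightarrow> hkm k m l \<gamma> (- y) = - hkm k m l \<gamma> y"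
  by (simp_all add: hkm_def)

theorem theorem5p1:
  fixes l :: real and k m :: nat
  assumes "l > 0" and "k \<ge> 1" and "m \<ge> 1"
  shows "(\<exists>!\<gamma>. \<gamma> \<in> {real k * pi / (2 * l) <..< (real k + 1) * pi / (2 * l)} \<and> gamma_eq k m l \<gamma>) \<and>
         (\<forall>\<gamma>. \<gamma> \<in> {real k * pi / (2 * l) <..< (real k + 1) * pi / (2 * l)} \<and> gamma_eq k m l \<gamma> \<longrightarrow>
           (let lam = (real m)\<^sup>2 + \<gamma>\<^sup>2; h = hkm k m l \<gamma> in
              is_eigenpair l lam (\<lambda>x y. h y * sin (real m * x)) \<and>
              ode_solution l m lam h \<and>
              (odd k \<longrightarrow> (\<forall>y. h (- y) = h y)) \<and>
              (even k \<longrightarrow> (\<forall>y. h (- y) = - h y)) \<and>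
              (k = 1 \<longrightarrow> (\<forall>y \<in> {-l<..<l}. h y > 0))))"
proof (intro conjI allI impI)
  show "\<exists>!\<gamma>. \<gamma> \<in> {real k * pi / (2 * l) <..< (real k + 1) * pi / (2 * l)} \<and> gamma_eq k m l \<gamma>"
    using ex1_gamma_eq[OF assms] .
  fix \<gamma> assume \<gamma>: "\<gamma> \<in> {real k * pi / (2 * l) <..< (real k + 1) * pi / (2 * l)} \<and> gamma_eq k m l \<gamma>"
  have "hkm k m l \<gamma> y > 0" if "k = 1" "y \<in> {-l<..<l}" for y
  proof -
    have "pi / 2 < \<gamma> * l" "\<gamma> * l < pi"
      using \<gamma> mem_gamma_interval_iff[OF \<open>l > 0\<close>, of \<gamma> 1] \<open>k = 1\<close> by auto
    moreover have "\<gamma> * tan (\<gamma> * l) = - real m * tanh (real m * l)"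
      using \<gamma> \<open>k = 1\<close> by (simp add: gamma_eq_def)
    ultimately show ?thesis
      using hkm_first_mode_pos[OF \<open>l > 0\<close> \<open>m \<ge> 1\<close>] that by (simp add: abs_less_iff)
  qed
  then show "let lam = (real m)\<^sup>2 + \<gamma>\<^sup>2; h = hkm k m l \<gamma> in
              is_eigenpair l lam (\<lambda>x y. h y * sin (real m * x)) \<and>
              ode_solution l m lam h \<and>
              (odd k \<longrightarrow> (\<forall>y. h (- y) = h y)) \<and>
              (even k \<longrightarrow> (\<forall>y. h (- y) = - h y)) \<and>
              (k = 1 \<longrightarrow> (\<forall>y \<in> {-l<..<l}. h y > 0))"
    unfolding Let_def using eigenpair_and_ode_solution_hkm[OF assms] \<gamma> hkm_parity by blast
qed

end
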